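(* Let $(\mathscr{C},\otimes,I)$ be a monoidal category with finite limits and countable colimits such that for every object $C$ the functors $-\otimes C$ and $C\otimes-$ preserve reflexive coequalizers and colimits of countable chains. If $q:B\to C$ and $q':B\to C'$ are regular epimorphisms in $\mathscr{C}$, then their cointersection, i.e. the pushout square $r\circ q=r'\circ q'$ with $r:C\to D$, $r':C'\to D$, is preserved by tensoring on either side: for every object $E$, the squares obtained by applying $E\otimes-$ and $-\otimes E$ are again pushouts.
   Context: A regular epimorphism is a morphism which is the coequalizer of some pair of parallel morphisms. A pair of parallel morphisms is reflexive if it has a common section. *)

theory Defs
  imports Main
begin

record ('o,'m) cat =
  Ob  :: "'o set"
  Hom :: "'o \<Rightarrow> 'o \<Rightarrow> 'm set"
  cmp :: "'m \<Rightarrow> 'm \<Rightarrow> 'm"   (* cmp C g f = g \<circ> f *)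
  ide :: "'o \<Rightarrow> 'm"

definition category :: "('o,'m) cat \<Rightarrow> bool" where
  "category C \<longleftrightarrow>
     (\<forall>a b. Hom C a b \<noteq> {} \<longrightarrow> a \<in> Ob C \<and> b \<in> Ob C) \<and>
     (\<forall>a b a' b' f. f \<in> Hom C a b \<and> f \<in> Hom C a' b' \<longrightarrow> a = a' \<and> b = b') \<and>
     (\<forall>a\<in>Ob C. ide C a \<in> Hom C a a) \<and>
     (\<forall>a b c f g. f \<in> Hom C a b \<longrightarrow> g \<in> Hom C b c \<longrightarrow> cmp C g f \<in> Hom C a c) \<and>
     (\<forall>a b f. f \<in> Hom C a b \<longrightarrow> cmp C (ide C b) f = f \<and> cmp C f (ide C a) = f) \<and>
     (\<forall>a b c d f g h. f \<in> Hom C a b \<longrightarrow> g \<in> Hom C b c \<longrightarrow> h \<in> Hom C c d \<longrightarrow>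
        cmp C h (cmp C g f) = cmp C (cmp C h g) f)"

definition iso_in :: "('o,'m) cat \<Rightarrow> 'o \<Rightarrow> 'o \<Rightarrow> 'm \<Rightarrow> bool" where
  "iso_in C a b f \<longleftrightarrow> f \<in> Hom C a b \<and>
     (\<exists>g\<in>Hom C b a. cmp C g f = ide C a \<and> cmp C f g = ide C b)"

record ('o,'m) mon_str =
  tob :: "'o \<Rightarrow> 'o \<Rightarrow> 'o"
  tar :: "'m \<Rightarrow> 'm \<Rightarrow> 'm"
  unt :: 'o
  asc :: "'o \<Rightarrow> 'o \<Rightarrow> 'o \<Rightarrow> 'm"       (* (a\<otimes>b)\<otimes>c \<rightarrow> a\<otimes>(b\<otimes>c) *)
  lu  :: "'o \<Rightarrow> 'm"                    (* I\<otimes>a \<rightarrow> a *)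
  ru  :: "'o \<Rightarrow> 'm"                    (* a\<otimes>I \<rightarrow> a *)

definition monoidal_category :: "('o,'m) cat \<Rightarrow> ('o,'m) mon_str \<Rightarrow> bool" where
  "monoidal_category C M \<longleftrightarrow> category C \<and> unt M \<in> Ob C \<and>
     (\<forall>a\<in>Ob C. \<forall>b\<in>Ob C. tob M a b \<in> Ob C) \<and>
     (\<forall>a b a' b' f g. f \<in> Hom C a b \<longrightarrow> g \<in> Hom C a' b' \<longrightarrow>
        tar M f g \<in> Hom C (tob M a a') (tob M b b')) \<and>
     (\<forall>a\<in>Ob C. \<forall>b\<in>Ob C. tar M (ide C a) (ide C b) = ide C (tob M a b)) \<and>
     (\<forall>a b c a' b' c' f g f' g'. f \<in> Hom C a b \<longrightarrow> g \<in> Hom C b c \<longrightarrow>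
        f' \<in> Hom C a' b' \<longrightarrow> g' \<in> Hom C b' c' \<longrightarrow>
        tar M (cmp C g f) (cmp C g' f') = cmp C (tar M g g') (tar M f f')) \<and>
     (\<forall>a\<in>Ob C. \<forall>b\<in>Ob C. \<forall>c\<in>Ob C.
        iso_in C (tob M (tob M a b) c) (tob M a (tob M b c)) (asc M a b c)) \<and>
     (\<forall>a b c a' b' c' f g h. f \<in> Hom C a a' \<longrightarrow> g \<in> Hom C b b' \<longrightarrow> h \<in> Hom C c c' \<longrightarrow>
        cmp C (asc M a' b' c') (tar M (tar M f g) h) = cmp C (tar M f (tar M g h)) (asc M a b c)) \<and>
     (\<forall>a\<in>Ob C. iso_in C (tob M (unt M) a) a (lu M a)) \<and>
     (\<forall>a b f. f \<in> Hom C a b \<longrightarrow> cmp C (lu M b) (tar M (ide C (unt M)) f) = cmp C f (lu M a)) \<and>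
     (\<forall>a\<in>Ob C. iso_in C (tob M a (unt M)) a (ru M a)) \<and>
     (\<forall>a b f. f \<in> Hom C a b \<longrightarrow> cmp C (ru M b) (tar M f (ide C (unt M))) = cmp C f (ru M a)) \<and>
     (\<forall>a\<in>Ob C. \<forall>b\<in>Ob C. \<forall>c\<in>Ob C. \<forall>d\<in>Ob C.
        cmp C (asc M a b (tob M c d)) (asc M (tob M a b) c d) =
        cmp C (tar M (ide C a) (asc M b c d))
          (cmp C (asc M a (tob M b c) d) (tar M (asc M a b c) (ide C d)))) \<and>
     (\<forall>a\<in>Ob C. \<forall>b\<in>Ob C.
        cmp C (tar M (ide C a) (lu M b)) (asc M a (unt M) b) = tar M (ru M a) (ide C b))"

text \<open>Index categories have objects and arrows in nat; hence they are exactly the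
  (up to isomorphism) countable small categories.\<close>

definition diagram :: "(nat,nat) cat \<Rightarrow> ('o,'m) cat \<Rightarrow> (nat \<Rightarrow> 'o) \<Rightarrow> (nat \<Rightarrow> 'm) \<Rightarrow> bool" where
  "diagram J C Do Dm \<longleftrightarrow> category J \<and>
     (\<forall>j\<in>Ob J. Do j \<in> Ob C) \<and>
     (\<forall>i j u. u \<in> Hom J i j \<longrightarrow> Dm u \<in> Hom C (Do i) (Do j)) \<and>
     (\<forall>j\<in>Ob J. Dm (ide J j) = ide C (Do j)) \<and>
     (\<forall>i j k u v. u \<in> Hom J i j \<longrightarrow> v \<in> Hom J j k \<longrightarrow> Dm (cmp J v u) = cmp C (Dm v) (Dm u))"

definition cone :: "(nat,nat) cat \<Rightarrow> ('o,'m) cat \<Rightarrow> (nat \<Rightarrow> 'o) \<Rightarrow> (nat \<Rightarrow> 'm) \<Rightarrow> 'o \<Rightarrow> (nat \<Rightarrow> 'm) \<Rightarrow> bool" where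
  "cone J C Do Dm x c \<longleftrightarrow> x \<in> Ob C \<and>
     (\<forall>j\<in>Ob J. c j \<in> Hom C x (Do j)) \<and>
     (\<forall>i j u. u \<in> Hom J i j \<longrightarrow> cmp C (Dm u) (c i) = c j)"

definition limit_cone :: "(nat,nat) cat \<Rightarrow> ('o,'m) cat \<Rightarrow> (nat \<Rightarrow> 'o) \<Rightarrow> (nat \<Rightarrow> 'm) \<Rightarrow> 'o \<Rightarrow> (nat \<Rightarrow> 'm) \<Rightarrow> bool" where
  "limit_cone J C Do Dm x c \<longleftrightarrow> cone J C Do Dm x c \<and>
     (\<forall>y d. cone J C Do Dm y d \<longrightarrow>
        (\<exists>!h. h \<in> Hom C y x \<and> (\<forall>j\<in>Ob J. cmp C (c j) h = d j)))"

definition cocone :: "(nat,nat) cat \<Rightarrow> ('o,'m) cat \<Rightarrow> (nat \<Rightarrow> 'o) \<Rightarrow> (nat \<Rightarrow> 'm) \<Rightarrow> 'o \<Rightarrow> (nat \<Rightarrow> 'm) \<Rightarrow> bool" where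
  "cocone J C Do Dm x c \<longleftrightarrow> x \<in> Ob C \<and>
     (\<forall>j\<in>Ob J. c j \<in> Hom C (Do j) x) \<and>
     (\<forall>i j u. u \<in> Hom J i j \<longrightarrow> cmp C (c j) (Dm u) = c i)"

definition colimit_cocone :: "(nat,nat) cat \<Rightarrow> ('o,'m) cat \<Rightarrow> (nat \<Rightarrow> 'o) \<Rightarrow> (nat \<Rightarrow> 'm) \<Rightarrow> 'o \<Rightarrow> (nat \<Rightarrow> 'm) \<Rightarrow> bool" where
  "colimit_cocone J C Do Dm x c \<longleftrightarrow> cocone J C Do Dm x c \<and>
     (\<forall>y d. cocone J C Do Dm y d \<longrightarrow>
        (\<exists>!h. h \<in> Hom C x y \<and> (\<forall>j\<in>Ob J. cmp C h (c j) = d j)))"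

definition has_finite_limits :: "('o,'m) cat \<Rightarrow> bool" where
  "has_finite_limits C \<longleftrightarrow>
     (\<forall>J Do Dm. finite (Ob J) \<and> (\<forall>i j. finite (Hom J i j)) \<and> diagram J C Do Dm \<longrightarrow>
        (\<exists>x c. limit_cone J C Do Dm x c))"

definition has_countable_colimits :: "('o,'m) cat \<Rightarrow> bool" where
  "has_countable_colimits C \<longleftrightarrow>
     (\<forall>J Do Dm. diagram J C Do Dm \<longrightarrow> (\<exists>x c. colimit_cocone J C Do Dm x c))"

definition coequalizer :: "('o,'m) cat \<Rightarrow> 'm \<Rightarrow> 'm \<Rightarrow> 'm \<Rightarrow> bool" where
  "coequalizer C f g q \<longleftrightarrow> (\<exists>a b e. f \<in> Hom C a b \<and> g \<in> Hom C a b \<and> q \<in> Hom C b e \<and>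
     cmp C q f = cmp C q g \<and>
     (\<forall>e' q'. q' \<in> Hom C b e' \<and> cmp C q' f = cmp C q' g \<longrightarrow>
        (\<exists>!h. h \<in> Hom C e e' \<and> cmp C h q = q')))"

definition reflexive_pair :: "('o,'m) cat \<Rightarrow> 'm \<Rightarrow> 'm \<Rightarrow> bool" where
  "reflexive_pair C f g \<longleftrightarrow> (\<exists>a b s. f \<in> Hom C a b \<and> g \<in> Hom C a b \<and> s \<in> Hom C b a \<and>
     cmp C f s = ide C b \<and> cmp C g s = ide C b)"

definition regular_epi :: "('o,'m) cat \<Rightarrow> 'm \<Rightarrow> bool" where
  "regular_epi C q \<longleftrightarrow> (\<exists>f g. coequalizer C f g q)"

definition pushout :: "('o,'m) cat \<Rightarrow> 'm \<Rightarrow> 'm \<Rightarrow> 'm \<Rightarrow> 'm \<Rightarrow> bool" where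
  "pushout C q q' r r' \<longleftrightarrow> (\<exists>b c c' d. q \<in> Hom C b c \<and> q' \<in> Hom C b c' \<and>
     r \<in> Hom C c d \<and> r' \<in> Hom C c' d \<and> cmp C r q = cmp C r' q' \<and>
     (\<forall>d' s s'. s \<in> Hom C c d' \<and> s' \<in> Hom C c' d' \<and> cmp C s q = cmp C s' q' \<longrightarrow>
        (\<exists>!h. h \<in> Hom C d d' \<and> cmp C h r = s \<and> cmp C h r' = s')))"

definition chain :: "('o,'m) cat \<Rightarrow> (nat \<Rightarrow> 'o) \<Rightarrow> (nat \<Rightarrow> 'm) \<Rightarrow> bool" where
  "chain C X x \<longleftrightarrow> (\<forall>n. X n \<in> Ob C \<and> x n \<in> Hom C (X n) (X (Suc n)))"

definition chain_colimit :: "('o,'m) cat \<Rightarrow> (nat \<Rightarrow> 'o) \<Rightarrow> (nat \<Rightarrow> 'm) \<Rightarrow> 'o \<Rightarrow> (nat \<Rightarrow> 'm) \<Rightarrow> bool" where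
  "chain_colimit C X x L c \<longleftrightarrow> L \<in> Ob C \<and>
     (\<forall>n. c n \<in> Hom C (X n) L \<and> cmp C (c (Suc n)) (x n) = c n) \<and>
     (\<forall>L' c'. L' \<in> Ob C \<and> (\<forall>n. c' n \<in> Hom C (X n) L' \<and> cmp C (c' (Suc n)) (x n) = c' n) \<longrightarrow>
        (\<exists>!h. h \<in> Hom C L L' \<and> (\<forall>n. cmp C h (c n) = c' n)))"

definition preserves_reflexive_coequalizers ::
  "('o,'m) cat \<Rightarrow> ('o \<Rightarrow> 'o) \<Rightarrow> ('m \<Rightarrow> 'm) \<Rightarrow> bool" where
  "preserves_reflexive_coequalizers C Fo Fm \<longleftrightarrow>
     (\<forall>f g q. reflexive_pair C f g \<and> coequalizer C f g q \<longrightarrow> coequalizer C (Fm f) (Fm g) (Fm q))"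

definition preserves_chain_colimits ::
  "('o,'m) cat \<Rightarrow> ('o \<Rightarrow> 'o) \<Rightarrow> ('m \<Rightarrow> 'm) \<Rightarrow> bool" where
  "preserves_chain_colimits C Fo Fm \<longleftrightarrow>
     (\<forall>X x L c. chain C X x \<and> chain_colimit C X x L c \<longrightarrow>
        chain_colimit C (Fo \<circ> X) (Fm \<circ> x) (Fo L) (Fm \<circ> c))"

end

theory Submission
  imports Defs
begin

text \<open>With coproducts, a regular epimorphism is the coequalizer of a reflexive pair: enlarge the
  domain of the pair by a copy of the codomain on which both maps are the identity. So let \<open>q\<close>,
  \<open>q'\<close> coequalize reflexive pairs \<open>k\<^sub>1, k\<^sub>2 : K \<rightrightarrows> B\<close> and \<open>k\<^sub>1', k\<^sub>2' : K' \<rightrightarrows> B\<close> with common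
  sections \<open>\<sigma>\<close>, \<open>\<sigma>'\<close>. A pushout of a reflexive coequalizer along any map is again the coequalizer
  of a reflexive pair, obtained from a further pushout of the section. Applied twice, this makes
  \<open>r : C \<rightarrow> D\<close> the coequalizer of a reflexive pair \<open>u\<^sub>1, u\<^sub>2 : P \<rightrightarrows> C\<close> with \<open>u\<^sub>i \<circ> p = q \<circ> k\<^sub>i'\<close>,
  where \<open>P\<close> is the pushout of \<open>\<sigma>'\<close> and \<open>q\<close>, and makes \<open>p : K' \<rightarrow> P\<close> a reflexive coequalizer too.
  A functor \<open>F\<close> preserving reflexive coequalizers preserves all these coequalizers, and they alone
  give the pushout property of the image square: if \<open>t \<circ> F q = t' \<circ> F q'\<close>, the maps \<open>t \<circ> F u\<^sub>i\<close>
  agree after the epimorphism \<open>F p\<close>, so \<open>t\<close> factors through \<open>F r\<close>.\<close>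

lemma category_Hom_Ob: "category C \<Longrightarrow> f \<in> Hom C a b \<Longrightarrow> a \<in> Ob C \<and> b \<in> Ob C"
  unfolding category_def by (metis empty_iff)

lemma category_Hom_unique:
  "category C \<Longrightarrow> f \<in> Hom C a b \<Longrightarrow> f \<in> Hom C a' b' \<Longrightarrow> a = a' \<and> b = b'"
  unfolding category_def by metis

lemma category_ide_Hom: "category C \<Longrightarrow> a \<in> Ob C \<Longrightarrow> ide C a \<in> Hom C a a"
  unfolding category_def by blast

lemma category_cmp_Hom:
  "category C \<Longrightarrow> f \<in> Hom C a b \<Longrightarrow> g \<in> Hom C b c \<Longrightarrow> cmp C g f \<in> Hom C a c"
  unfolding category_def by blast

lemma category_cmp_ide_left: "category C \<Longrightarrow> f \<in> Hom C a b \<Longrightarrow> cmp C (ide C b) f = f"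
  unfolding category_def by blast

lemma category_cmp_ide_right: "category C \<Longrightarrow> f \<in> Hom C a b \<Longrightarrow> cmp C f (ide C a) = f"
  unfolding category_def by blast

lemma category_cmp_assoc:
  "category C \<Longrightarrow> f \<in> Hom C a b \<Longrightarrow> g \<in> Hom C b c \<Longrightarrow> h \<in> Hom C c d \<Longrightarrow>
     cmp C h (cmp C g f) = cmp C (cmp C h g) f"
  unfolding category_def by blast

definition coequalizer_in :: "('o,'m) cat \<Rightarrow> 'm \<Rightarrow> 'm \<Rightarrow> 'm \<Rightarrow> 'o \<Rightarrow> 'o \<Rightarrow> 'o \<Rightarrow> bool" where
  "coequalizer_in C f g q K X Q \<longleftrightarrow> f \<in> Hom C K X \<and> g \<in> Hom C K X \<and> q \<in> Hom C X Q \<and>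
     cmp C q f = cmp C q g \<and>
     (\<forall>Y q'. q' \<in> Hom C X Y \<and> cmp C q' f = cmp C q' g \<longrightarrow> (\<exists>!h. h \<in> Hom C Q Y \<and> cmp C h q = q'))"

definition reflexive_coequalizer_in ::
  "('o,'m) cat \<Rightarrow> 'm \<Rightarrow> 'm \<Rightarrow> 'm \<Rightarrow> 'm \<Rightarrow> 'o \<Rightarrow> 'o \<Rightarrow> 'o \<Rightarrow> bool" where
  "reflexive_coequalizer_in C f g s q K X Q \<longleftrightarrow> coequalizer_in C f g q K X Q \<and>
     s \<in> Hom C X K \<and> cmp C f s = ide C X \<and> cmp C g s = ide C X"

definition pushout_in ::
  "('o,'m) cat \<Rightarrow> 'm \<Rightarrow> 'm \<Rightarrow> 'm \<Rightarrow> 'm \<Rightarrow> 'o \<Rightarrow> 'o \<Rightarrow> 'o \<Rightarrow> 'o \<Rightarrow> bool" where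
  "pushout_in C q q' r r' B X Y D \<longleftrightarrow> q \<in> Hom C B X \<and> q' \<in> Hom C B Y \<and>
     r \<in> Hom C X D \<and> r' \<in> Hom C Y D \<and> cmp C r q = cmp C r' q' \<and>
     (\<forall>Z s s'. s \<in> Hom C X Z \<and> s' \<in> Hom C Y Z \<and> cmp C s q = cmp C s' q' \<longrightarrow>
        (\<exists>!h. h \<in> Hom C D Z \<and> cmp C h r = s \<and> cmp C h r' = s'))"

lemma coequalizer_iff_coequalizer_in: "coequalizer C f g q \<longleftrightarrow> (\<exists>K X Q. coequalizer_in C f g q K X Q)"
  unfolding coequalizer_def coequalizer_in_def by blast

lemma pushout_iff_pushout_in: "pushout C q q' r r' \<longleftrightarrow> (\<exists>B X Y D. pushout_in C q q' r r' B X Y D)"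
  unfolding pushout_def pushout_in_def by blast

lemma pushout_in_swap: "pushout_in C q q' r r' B X Y D \<Longrightarrow> pushout_in C q' q r' r B Y X D"
  unfolding pushout_in_def by metis

lemma coequalizer_in_cancel:
  assumes C: "category C" and cq: "coequalizer_in C f g q K X Q"
    and x: "x \<in> Hom C Q Y" and y: "y \<in> Hom C Q Y" and eq: "cmp C x q = cmp C y q"
  shows "x = y"
proof -
  have f: "f \<in> Hom C K X" and g: "g \<in> Hom C K X" and q: "q \<in> Hom C X Q"
    and qfg: "cmp C q f = cmp C q g" and U: "\<And>Y q'. q' \<in> Hom C X Y \<Longrightarrow> cmp C q' f = cmp C q' g \<Longrightarrow>
        \<exists>!h. h \<in> Hom C Q Y \<and> cmp C h q = q'"
    using cq unfolding coequalizer_in_def by auto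
  have "cmp C (cmp C x q) f = cmp C (cmp C x q) g"
    using category_cmp_assoc[OF C f q x] category_cmp_assoc[OF C g q x] qfg by simp
  with U[OF category_cmp_Hom[OF C q x]] show ?thesis
    using x y eq by (metis (no_types, lifting))
qed

section \<open>Finite colimits from countable colimits\<close>

definition discrete_pair_cat :: "(nat,nat) cat" where
  "discrete_pair_cat = \<lparr>Ob = {0,1}, Hom = (\<lambda>i j. if i = j \<and> i \<le> 1 then {i} else {}),
     cmp = (\<lambda>v u. u), ide = (\<lambda>i. i)\<rparr>"

text \<open>The span \<open>1 \<leftarrow> 0 \<rightarrow> 2\<close>, with arrows named \<open>3 : 0 \<rightarrow> 1\<close> and \<open>4 : 0 \<rightarrow> 2\<close>.\<close>
definition span_cat :: "(nat,nat) cat" where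
  "span_cat = \<lparr>Ob = {0,1,2},
     Hom = (\<lambda>i j. {k. (k = i \<and> i = j \<and> i \<le> 2) \<or> (k = 3 \<and> i = 0 \<and> j = 1) \<or> (k = 4 \<and> i = 0 \<and> j = 2)}),
     cmp = (\<lambda>v u. if v \<le> 2 then u else v), ide = (\<lambda>i. i)\<rparr>"

lemma category_discrete_pair_cat: "category discrete_pair_cat"
  unfolding category_def discrete_pair_cat_def by (auto split: if_splits)

lemma category_span_cat: "category span_cat"
  unfolding category_def span_cat_def by auto

lemma has_countable_colimits_coproduct:
  assumes C: "category C" and colim: "has_countable_colimits C"
    and A: "A \<in> Ob C" and B: "B \<in> Ob C"
  obtains S i0 i1 where "i0 \<in> Hom C A S" and "i1 \<in> Hom C B S"
    and "\<And>Z m0 m1. m0 \<in> Hom C A Z \<Longrightarrow> m1 \<in> Hom C B Z \<Longrightarrow>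
           \<exists>!h. h \<in> Hom C S Z \<and> cmp C h i0 = m0 \<and> cmp C h i1 = m1"
proof -
  define Do where "Do = (\<lambda>n::nat. if n = 0 then A else B)"
  define Dm where "Dm = (\<lambda>n::nat. if n = 0 then ide C A else ide C B)"
  have "diagram discrete_pair_cat C Do Dm"
    unfolding diagram_def using category_discrete_pair_cat A B
    by (auto simp: discrete_pair_cat_def Do_def Dm_def category_ide_Hom[OF C]
        category_cmp_ide_left[OF C category_ide_Hom[OF C]] split: if_splits)
  then obtain S c where S: "colimit_cocone discrete_pair_cat C Do Dm S c"
    using colim unfolding has_countable_colimits_def by blast
  show thesis
  proof
    show "c 0 \<in> Hom C A S" "c 1 \<in> Hom C B S"
      using S unfolding colimit_cocone_def cocone_def by (auto simp: discrete_pair_cat_def Do_def)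
    fix Z m0 m1 assume m0: "m0 \<in> Hom C A Z" and m1: "m1 \<in> Hom C B Z"
    define d where "d = (\<lambda>n::nat. if n = 0 then m0 else m1)"
    have "cocone discrete_pair_cat C Do Dm Z d"
      unfolding cocone_def using m0 m1 category_Hom_Ob[OF C]
      by (auto simp: discrete_pair_cat_def Do_def Dm_def d_def category_cmp_ide_right[OF C]
          split: if_splits)
    then have "\<exists>!h. h \<in> Hom C S Z \<and> (\<forall>j\<in>{0,1}. cmp C h (c j) = d j)"
      using S unfolding colimit_cocone_def discrete_pair_cat_def by simp
    then show "\<exists>!h. h \<in> Hom C S Z \<and> cmp C h (c 0) = m0 \<and> cmp C h (c 1) = m1"
      by (simp add: d_def)
  qed
qed

lemma has_countable_colimits_pushout:
  assumes C: "category C" and colim: "has_countable_colimits C"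
    and a: "a \<in> Hom C B X" and b: "b \<in> Hom C B Y"
  obtains P i j where "pushout_in C a b i j B X Y P"
proof -
  have BXY: "B \<in> Ob C" "X \<in> Ob C" "Y \<in> Ob C"
    using category_Hom_Ob[OF C] a b by blast+
  define Do where "Do = (\<lambda>n::nat. if n = 0 then B else if n = 1 then X else Y)"
  define Dm where "Dm = (\<lambda>n::nat. if n = 3 then a else if n = 4 then b else ide C (Do n))"
  have "diagram span_cat C Do Dm"
    unfolding diagram_def using category_span_cat BXY a b
    by (auto simp: span_cat_def Do_def Dm_def category_ide_Hom[OF C]
        category_cmp_ide_left[OF C category_ide_Hom[OF C]] category_cmp_ide_left[OF C a]
        category_cmp_ide_left[OF C b] category_cmp_ide_right[OF C])
  then obtain P c where P: "colimit_cocone span_cat C Do Dm P c"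
    using colim unfolding has_countable_colimits_def by blast
  have c1: "c 1 \<in> Hom C X P" and c2: "c 2 \<in> Hom C Y P"
    using P unfolding colimit_cocone_def cocone_def by (auto simp: span_cat_def Do_def)
  have e1: "cmp C (c 1) a = c 0" and e2: "cmp C (c 2) b = c 0"
    using P unfolding colimit_cocone_def cocone_def
    by (auto simp: span_cat_def Dm_def dest!: spec[of _ 0] spec[of _ 1] spec[of _ 2])
  have "pushout_in C a b (c 1) (c 2) B X Y P"
    unfolding pushout_in_def
  proof (intro conjI allI impI)
    show "cmp C (c 1) a = cmp C (c 2) b" using e1 e2 by simp
    fix Z m1 m2 assume m: "m1 \<in> Hom C X Z \<and> m2 \<in> Hom C Y Z \<and> cmp C m1 a = cmp C m2 b"
    define d where "d = (\<lambda>n::nat. if n = 0 then cmp C m1 a else if n = 1 then m1 else m2)"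
    have ma: "cmp C m1 a \<in> Hom C B Z" using category_cmp_Hom[OF C a] m by blast
    have "cocone span_cat C Do Dm Z d"
      unfolding cocone_def using m category_Hom_Ob[OF C] ma category_cmp_ide_right[OF C ma]
      by (auto simp: span_cat_def Do_def Dm_def d_def category_cmp_ide_right[OF C])
    then have U: "\<exists>!h. h \<in> Hom C P Z \<and> (\<forall>j\<in>{0,1,2}. cmp C h (c j) = d j)"
      using P unfolding colimit_cocone_def span_cat_def by simp
    have "h \<in> Hom C P Z \<and> (\<forall>j\<in>{0,1,2}. cmp C h (c j) = d j) \<longleftrightarrow>
        h \<in> Hom C P Z \<and> cmp C h (c 1) = m1 \<and> cmp C h (c 2) = m2" for h
      using e1 category_cmp_assoc[OF C a c1, of h Z] by (auto simp: d_def)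
    with U show "\<exists>!h. h \<in> Hom C P Z \<and> cmp C h (c 1) = m1 \<and> cmp C h (c 2) = m2"
      by simp
  qed (use a b c1 c2 in auto)
  then show thesis ..
qed

section \<open>Regular epimorphisms as reflexive coequalizers\<close>

lemma regular_epi_reflexive_coequalizer:
  assumes C: "category C" and colim: "has_countable_colimits C"
    and rq: "regular_epi C q" and q: "q \<in> Hom C X Q"
  obtains K f g s where "reflexive_coequalizer_in C f g s q K X Q"
proof -
  obtain f0 g0 K0 X0 Q0 where cq0: "coequalizer_in C f0 g0 q K0 X0 Q0"
    using rq unfolding regular_epi_def coequalizer_iff_coequalizer_in by blast
  have "q \<in> Hom C X0 Q0" using cq0 unfolding coequalizer_in_def by blast
  then have "X0 = X" "Q0 = Q" using category_Hom_unique[OF C q] by blast+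
  with cq0 have cq: "coequalizer_in C f0 g0 q K0 X Q" by simp
  then have f0: "f0 \<in> Hom C K0 X" and g0: "g0 \<in> Hom C K0 X" and qfg: "cmp C q f0 = cmp C q g0"
    unfolding coequalizer_in_def by auto
  have K0: "K0 \<in> Ob C" and X: "X \<in> Ob C" using category_Hom_Ob[OF C f0] by auto
  have iX: "ide C X \<in> Hom C X X" using category_ide_Hom[OF C X] .
  obtain S i0 i1 where i0: "i0 \<in> Hom C K0 S" and i1: "i1 \<in> Hom C X S"
    and SU: "\<And>Z m0 m1. m0 \<in> Hom C K0 Z \<Longrightarrow> m1 \<in> Hom C X Z \<Longrightarrow>
        \<exists>!h. h \<in> Hom C S Z \<and> cmp C h i0 = m0 \<and> cmp C h i1 = m1"
    by (rule has_countable_colimits_coproduct[OF C colim K0 X]) blast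
  \<comment> \<open>\<open>f = [f\<^sub>0, id]\<close> and \<open>g = [g\<^sub>0, id]\<close> on \<open>K\<^sub>0 + X\<close>, with common section the coprojection \<open>i\<^sub>1\<close>\<close>
  obtain f where f: "f \<in> Hom C S X" "cmp C f i0 = f0" "cmp C f i1 = ide C X"
    using SU[OF f0 iX] by blast
  obtain g where g: "g \<in> Hom C S X" "cmp C g i0 = g0" "cmp C g i1 = ide C X"
    using SU[OF g0 iX] by blast
  have "coequalizer_in C f g q S X Q"
    unfolding coequalizer_in_def
  proof (intro conjI allI impI)
    have "\<exists>!h. h \<in> Hom C S Q \<and> cmp C h i0 = cmp C q f0 \<and> cmp C h i1 = q"
      using SU[OF category_cmp_Hom[OF C f0 q] q] .
    moreover have "cmp C (cmp C q f) i0 = cmp C q f0" "cmp C (cmp C q f) i1 = q"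
      "cmp C (cmp C q g) i0 = cmp C q f0" "cmp C (cmp C q g) i1 = q"
      using category_cmp_assoc[OF C i0 f(1) q] category_cmp_assoc[OF C i1 f(1) q]
        category_cmp_assoc[OF C i0 g(1) q] category_cmp_assoc[OF C i1 g(1) q]
        f g qfg category_cmp_ide_right[OF C q] by simp_all
    ultimately show "cmp C q f = cmp C q g"
      using category_cmp_Hom[OF C f(1) q] category_cmp_Hom[OF C g(1) q] by blast
  next
    fix Y h assume h: "h \<in> Hom C X Y \<and> cmp C h f = cmp C h g"
    then have "cmp C (cmp C h f) i0 = cmp C (cmp C h g) i0" by simp
    then have "cmp C h f0 = cmp C h g0"
      using category_cmp_assoc[OF C i0 f(1), of h Y] category_cmp_assoc[OF C i0 g(1), of h Y] h f g
      by simp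
    then show "\<exists>!k. k \<in> Hom C Q Y \<and> cmp C k q = h"
      using cq h unfolding coequalizer_in_def by blast
  qed (use f g q in auto)
  with i1 f g have "reflexive_coequalizer_in C f g i1 q S X Q"
    unfolding reflexive_coequalizer_in_def by simp
  then show thesis ..
qed

section \<open>Pushouts of reflexive coequalizers\<close>

text \<open>The pushout \<open>b\<close> of \<open>e\<close> along \<open>a\<close> coequalizes \<open>a \<circ> f\<close> and \<open>a \<circ> g\<close>, a pair without common
  section; factoring it through the pushout \<open>W\<close> of the section \<open>s\<close> along \<open>a\<close> provides one.\<close>
lemma pushout_of_reflexive_coequalizer:
  assumes C: "category C"
    and e: "reflexive_coequalizer_in C f g s e K X Q"
    and po: "pushout_in C e a e' b X Q Y R"
    and W: "pushout_in C s a i j X K Y W"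
  obtains w1 w2 where "cmp C w1 i = cmp C a f" and "cmp C w2 i = cmp C a g"
    and "reflexive_coequalizer_in C w1 w2 j b W Y R"
proof -
  have f: "f \<in> Hom C K X" and g: "g \<in> Hom C K X" and ce: "coequalizer_in C f g e K X Q"
    and s: "s \<in> Hom C X K" and fs: "cmp C f s = ide C X" and gs: "cmp C g s = ide C X"
    and efg: "cmp C e f = cmp C e g"
    using e unfolding reflexive_coequalizer_in_def coequalizer_in_def by auto
  have a: "a \<in> Hom C X Y" and e': "e' \<in> Hom C Q R" and b: "b \<in> Hom C Y R" and ee: "e \<in> Hom C X Q"
    and comm: "cmp C e' e = cmp C b a"
    and poU: "\<And>Z t t'. t \<in> Hom C Q Z \<Longrightarrow> t' \<in> Hom C Y Z \<Longrightarrow> cmp C t e = cmp C t' a \<Longrightarrow>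
        \<exists>!h. h \<in> Hom C R Z \<and> cmp C h e' = t \<and> cmp C h b = t'"
    using po unfolding pushout_in_def by auto
  have i: "i \<in> Hom C K W" and j: "j \<in> Hom C Y W"
    and WU: "\<And>Z t t'. t \<in> Hom C K Z \<Longrightarrow> t' \<in> Hom C Y Z \<Longrightarrow> cmp C t s = cmp C t' a \<Longrightarrow>
        \<exists>!h. h \<in> Hom C W Z \<and> cmp C h i = t \<and> cmp C h j = t'"
    using W unfolding pushout_in_def by auto
  have Y: "Y \<in> Ob C" using category_Hom_Ob[OF C a] by blast
  have glue: "cmp C (cmp C c h) s = c"
    if "h \<in> Hom C K X" "cmp C h s = ide C X" "c \<in> Hom C X Z" for c h Z
    using category_cmp_assoc[OF C s that(1,3)] that(2) category_cmp_ide_right[OF C that(3)] by simp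
  have "cmp C (cmp C a h) s = cmp C (ide C Y) a" if "h \<in> Hom C K X" "cmp C h s = ide C X" for h
    using glue[OF that a] category_cmp_ide_left[OF C a] by simp
  then obtain w1 w2 where
    w1: "w1 \<in> Hom C W Y" "cmp C w1 i = cmp C a f" "cmp C w1 j = ide C Y" and
    w2: "w2 \<in> Hom C W Y" "cmp C w2 i = cmp C a g" "cmp C w2 j = ide C Y"
    using WU[OF category_cmp_Hom[OF C f a] category_ide_Hom[OF C Y]]
      WU[OF category_cmp_Hom[OF C g a] category_ide_Hom[OF C Y]] f g fs gs by meson
  have "coequalizer_in C w1 w2 b W Y R"
    unfolding coequalizer_in_def
  proof (intro conjI allI impI)
    have baf: "cmp C (cmp C b a) f \<in> Hom C K R"
      using category_cmp_Hom[OF C f category_cmp_Hom[OF C a b]] .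
    have "\<exists>!h. h \<in> Hom C W R \<and> cmp C h i = cmp C (cmp C b a) f \<and> cmp C h j = b"
      using WU[OF baf b] glue[OF f fs category_cmp_Hom[OF C a b]] by simp
    moreover have "cmp C (cmp C b w1) i = cmp C (cmp C b a) f" "cmp C (cmp C b w1) j = b"
      using category_cmp_assoc[OF C i w1(1) b] category_cmp_assoc[OF C j w1(1) b]
        category_cmp_assoc[OF C f a b] w1 category_cmp_ide_right[OF C b] by simp_all
    moreover have "cmp C (cmp C b a) g = cmp C (cmp C b a) f"
      using category_cmp_assoc[OF C f ee e'] category_cmp_assoc[OF C g ee e'] comm efg by simp
    then have "cmp C (cmp C b w2) i = cmp C (cmp C b a) f" "cmp C (cmp C b w2) j = b"
      using category_cmp_assoc[OF C i w2(1) b] category_cmp_assoc[OF C j w2(1) b]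
        category_cmp_assoc[OF C g a b] w2 category_cmp_ide_right[OF C b] by simp_all
    ultimately show "cmp C b w1 = cmp C b w2"
      using category_cmp_Hom[OF C w1(1) b] category_cmp_Hom[OF C w2(1) b] by blast
  next
    fix Z h assume h: "h \<in> Hom C Y Z \<and> cmp C h w1 = cmp C h w2"
    then have hY: "h \<in> Hom C Y Z" by simp
    have "cmp C (cmp C h w1) i = cmp C (cmp C h w2) i" using h by simp
    then have "cmp C (cmp C h a) f = cmp C (cmp C h a) g"
      using category_cmp_assoc[OF C i w1(1) hY] category_cmp_assoc[OF C i w2(1) hY]
        category_cmp_assoc[OF C f a hY] category_cmp_assoc[OF C g a hY] w1 w2 by simp
    then obtain k where k: "k \<in> Hom C Q Z" "cmp C k e = cmp C h a"
      using ce category_cmp_Hom[OF C a hY] unfolding coequalizer_in_def by blast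
    then obtain m where m: "m \<in> Hom C R Z" "cmp C m e' = k" "cmp C m b = h"
      using poU[OF k(1) hY] by blast
    show "\<exists>!m. m \<in> Hom C R Z \<and> cmp C m b = h"
    proof (intro ex1I[of _ m] conjI)
      fix m' assume m': "m' \<in> Hom C R Z \<and> cmp C m' b = h"
      have "cmp C (cmp C m' e') e = cmp C k e"
        using category_cmp_assoc[OF C ee e', of m' Z] category_cmp_assoc[OF C a b, of m' Z]
          comm m' k by simp
      then have "cmp C m' e' = k"
        using coequalizer_in_cancel[OF C ce category_cmp_Hom[OF C e' _] k(1)] m' by blast
      then show "m' = m"
        using poU[OF k(1) hY] k m m' by blast
    qed (use m in auto)
  qed (use w1 w2 b in auto)
  with w1 w2 j have "reflexive_coequalizer_in C w1 w2 j b W Y R"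
    unfolding reflexive_coequalizer_in_def by simp
  with w1 w2 show thesis using that by blast
qed

text \<open>The hypotheses are coequalizers because that is what a functor preserving reflexive
  coequalizers is known to preserve; of \<open>p\<close> only its being an epimorphism is used.\<close>
lemma pushout_in_if_coequalizers:
  assumes C: "category C"
    and q: "q \<in> Hom C B X" and r': "r' \<in> Hom C Y D" and comm: "cmp C r q = cmp C r' q'"
    and cq': "coequalizer_in C k1 k2 q' K B Y"
    and cp: "coequalizer_in C w1 w2 p W K P"
    and u1p: "cmp C u1 p = cmp C q k1" and u2p: "cmp C u2 p = cmp C q k2"
    and cr: "coequalizer_in C u1 u2 r P X D"
  shows "pushout_in C q q' r r' B X Y D"
  unfolding pushout_in_def
proof (intro conjI allI impI)
  have k1: "k1 \<in> Hom C K B" and k2: "k2 \<in> Hom C K B" and q': "q' \<in> Hom C B Y"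
    and qk: "cmp C q' k1 = cmp C q' k2"
    using cq' unfolding coequalizer_in_def by auto
  have p: "p \<in> Hom C K P" using cp unfolding coequalizer_in_def by auto
  have u1: "u1 \<in> Hom C P X" and u2: "u2 \<in> Hom C P X" and r: "r \<in> Hom C X D"
    and rU: "\<And>Z t. t \<in> Hom C X Z \<Longrightarrow> cmp C t u1 = cmp C t u2 \<Longrightarrow>
        \<exists>!h. h \<in> Hom C D Z \<and> cmp C h r = t"
    using cr unfolding coequalizer_in_def by auto
  show "q \<in> Hom C B X" "q' \<in> Hom C B Y" "r \<in> Hom C X D" "r' \<in> Hom C Y D" "cmp C r q = cmp C r' q'"
    using q q' r r' comm by auto
  fix Z t t' assume "t \<in> Hom C X Z \<and> t' \<in> Hom C Y Z \<and> cmp C t q = cmp C t' q'"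
  then have t: "t \<in> Hom C X Z" and t': "t' \<in> Hom C Y Z" and tq: "cmp C t q = cmp C t' q'"
    by auto
  have "cmp C (cmp C t u1) p = cmp C (cmp C t' q') k1"
    using category_cmp_assoc[OF C p u1 t] category_cmp_assoc[OF C k1 q t] u1p tq by simp
  also have "\<dots> = cmp C (cmp C t' q') k2"
    using category_cmp_assoc[OF C k1 q' t'] category_cmp_assoc[OF C k2 q' t'] qk by simp
  also have "\<dots> = cmp C (cmp C t u2) p"
    using category_cmp_assoc[OF C p u2 t] category_cmp_assoc[OF C k2 q t] u2p tq by simp
  finally have "cmp C t u1 = cmp C t u2"
    using coequalizer_in_cancel[OF C cp] category_cmp_Hom[OF C u1 t] category_cmp_Hom[OF C u2 t]
    by blast
  then obtain h where h: "h \<in> Hom C D Z" "cmp C h r = t"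
    and h_unique: "\<And>h'. h' \<in> Hom C D Z \<Longrightarrow> cmp C h' r = t \<Longrightarrow> h' = h"
    using rU[OF t] by blast
  have "cmp C (cmp C h r') q' = cmp C t' q'"
    using category_cmp_assoc[OF C q' r' h(1)] category_cmp_assoc[OF C q r h(1)] comm h(2) tq
    by simp
  then have "cmp C h r' = t'"
    using coequalizer_in_cancel[OF C cq' category_cmp_Hom[OF C r' h(1)] t'] by blast
  with h h_unique show "\<exists>!h. h \<in> Hom C D Z \<and> cmp C h r = t \<and> cmp C h r' = t'"
    by blast
qed

section \<open>Functors preserving reflexive coequalizers\<close>

definition endofunctor :: "('o,'m) cat \<Rightarrow> ('o \<Rightarrow> 'o) \<Rightarrow> ('m \<Rightarrow> 'm) \<Rightarrow> bool" where
  "endofunctor C Fo Fm \<longleftrightarrow>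
     (\<forall>a b f. f \<in> Hom C a b \<longrightarrow> Fm f \<in> Hom C (Fo a) (Fo b)) \<and>
     (\<forall>a\<in>Ob C. Fm (ide C a) = ide C (Fo a)) \<and>
     (\<forall>a b c f g. f \<in> Hom C a b \<longrightarrow> g \<in> Hom C b c \<longrightarrow> Fm (cmp C g f) = cmp C (Fm g) (Fm f))"

lemma endofunctor_Hom: "endofunctor C Fo Fm \<Longrightarrow> f \<in> Hom C a b \<Longrightarrow> Fm f \<in> Hom C (Fo a) (Fo b)"
  unfolding endofunctor_def by blast

lemma endofunctor_ide: "endofunctor C Fo Fm \<Longrightarrow> a \<in> Ob C \<Longrightarrow> Fm (ide C a) = ide C (Fo a)"
  unfolding endofunctor_def by blast

lemma endofunctor_cmp:
  "endofunctor C Fo Fm \<Longrightarrow> f \<in> Hom C a b \<Longrightarrow> g \<in> Hom C b c \<Longrightarrow>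
     Fm (cmp C g f) = cmp C (Fm g) (Fm f)"
  unfolding endofunctor_def by blast

lemma preserves_reflexive_coequalizer_in:
  assumes C: "category C" and F: "endofunctor C Fo Fm"
    and pres: "preserves_reflexive_coequalizers C Fo Fm"
    and e: "reflexive_coequalizer_in C f g s q K X Q"
  shows "reflexive_coequalizer_in C (Fm f) (Fm g) (Fm s) (Fm q) (Fo K) (Fo X) (Fo Q)"
proof -
  have f: "f \<in> Hom C K X" and g: "g \<in> Hom C K X" and q: "q \<in> Hom C X Q" and s: "s \<in> Hom C X K"
    and fs: "cmp C f s = ide C X" and gs: "cmp C g s = ide C X"
    using e unfolding reflexive_coequalizer_in_def coequalizer_in_def by auto
  have "reflexive_pair C f g" "coequalizer C f g q"
    using e unfolding reflexive_pair_def reflexive_coequalizer_in_def coequalizer_in_def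
      coequalizer_iff_coequalizer_in by blast+
  with pres obtain K' X' Q' where cFq: "coequalizer_in C (Fm f) (Fm g) (Fm q) K' X' Q'"
    unfolding preserves_reflexive_coequalizers_def coequalizer_iff_coequalizer_in by blast
  then have "Fm f \<in> Hom C K' X'" "Fm q \<in> Hom C X' Q'"
    unfolding coequalizer_in_def by auto
  then have "K' = Fo K" "X' = Fo X" "Q' = Fo Q"
    using category_Hom_unique[OF C] endofunctor_Hom[OF F f] endofunctor_Hom[OF F q] by blast+
  moreover have "cmp C (Fm f) (Fm s) = ide C (Fo X)" "cmp C (Fm g) (Fm s) = ide C (Fo X)"
    using endofunctor_cmp[OF F s f] endofunctor_cmp[OF F s g] endofunctor_ide[OF F] fs gs
      category_Hom_Ob[OF C f] by auto
  ultimately show ?thesis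
    using cFq endofunctor_Hom[OF F s] unfolding reflexive_coequalizer_in_def by simp
qed

lemma endofunctor_preserves_pushout_of_regular_epis:
  assumes C: "category C" and colim: "has_countable_colimits C"
    and F: "endofunctor C Fo Fm" and pres: "preserves_reflexive_coequalizers C Fo Fm"
    and rq: "regular_epi C q" and rq': "regular_epi C q'" and po: "pushout C q q' r r'"
  shows "pushout C (Fm q) (Fm q') (Fm r) (Fm r')"
proof -
  obtain B X Y D where po: "pushout_in C q q' r r' B X Y D"
    using po unfolding pushout_iff_pushout_in by blast
  then have q: "q \<in> Hom C B X" and q': "q' \<in> Hom C B Y"
    and r: "r \<in> Hom C X D" and r': "r' \<in> Hom C Y D" and comm: "cmp C r q = cmp C r' q'"
    unfolding pushout_in_def by auto
  obtain K k1 k2 \<sigma> where cq: "reflexive_coequalizer_in C k1 k2 \<sigma> q K B X"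
    using regular_epi_reflexive_coequalizer[OF C colim rq q] .
  obtain K' k1' k2' \<sigma>' where cq': "reflexive_coequalizer_in C k1' k2' \<sigma>' q' K' B Y"
    using regular_epi_reflexive_coequalizer[OF C colim rq' q'] .
  have \<sigma>: "\<sigma> \<in> Hom C B K" and \<sigma>': "\<sigma>' \<in> Hom C B K'"
    and k1': "k1' \<in> Hom C K' B" and k2': "k2' \<in> Hom C K' B"
    using cq cq' unfolding reflexive_coequalizer_in_def coequalizer_in_def by auto
  obtain P p j where P: "pushout_in C \<sigma>' q p j B K' X P"
    using has_countable_colimits_pushout[OF C colim \<sigma>' q] .
  obtain u1 u2 where u1p: "cmp C u1 p = cmp C q k1'" and u2p: "cmp C u2 p = cmp C q k2'"
    and cr: "reflexive_coequalizer_in C u1 u2 j r P X D"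
    using pushout_of_reflexive_coequalizer[OF C cq' pushout_in_swap[OF po] P] .
  obtain W i i' where W: "pushout_in C \<sigma> \<sigma>' i i' B K K' W"
    using has_countable_colimits_pushout[OF C colim \<sigma> \<sigma>'] .
  obtain w1 w2 where cp: "reflexive_coequalizer_in C w1 w2 i' p W K' P"
    using pushout_of_reflexive_coequalizer[OF C cq pushout_in_swap[OF P] W] .
  have p: "p \<in> Hom C K' P" and u1: "u1 \<in> Hom C P X" and u2: "u2 \<in> Hom C P X"
    using P cr unfolding pushout_in_def reflexive_coequalizer_in_def coequalizer_in_def by auto
  note F_coequalizer = preserves_reflexive_coequalizer_in[OF C F pres]
  have "pushout_in C (Fm q) (Fm q') (Fm r) (Fm r') (Fo B) (Fo X) (Fo Y) (Fo D)"
  proof (rule pushout_in_if_coequalizers[OF C])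
    show "cmp C (Fm r) (Fm q) = cmp C (Fm r') (Fm q')"
      using endofunctor_cmp[OF F q r] endofunctor_cmp[OF F q' r'] comm by simp
    show "cmp C (Fm u1) (Fm p) = cmp C (Fm q) (Fm k1')" "cmp C (Fm u2) (Fm p) = cmp C (Fm q) (Fm k2')"
      using endofunctor_cmp[OF F p u1] endofunctor_cmp[OF F p u2] endofunctor_cmp[OF F k1' q]
        endofunctor_cmp[OF F k2' q] u1p u2p by simp_all
  qed (use F_coequalizer[OF cq'] F_coequalizer[OF cp] F_coequalizer[OF cr]
        endofunctor_Hom[OF F q] endofunctor_Hom[OF F r'] in \<open>auto simp: reflexive_coequalizer_in_def\<close>)
  then show ?thesis
    unfolding pushout_iff_pushout_in by blast
qed

lemma endofunctor_tensor_left: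
  assumes mon: "monoidal_category C M" and E: "E \<in> Ob C"
  shows "endofunctor C (\<lambda>a. tob M E a) (\<lambda>f. tar M (ide C E) f)"
proof -
  have C: "category C" using mon unfolding monoidal_category_def by blast
  have E': "ide C E \<in> Hom C E E" "cmp C (ide C E) (ide C E) = ide C E"
    using category_ide_Hom[OF C E] category_cmp_ide_left[OF C category_ide_Hom[OF C E]] by auto
  show ?thesis
    using mon E E' unfolding endofunctor_def monoidal_category_def by metis
qed

lemma endofunctor_tensor_right:
  assumes mon: "monoidal_category C M" and E: "E \<in> Ob C"
  shows "endofunctor C (\<lambda>a. tob M a E) (\<lambda>f. tar M f (ide C E))"
proof -
  have C: "category C" using mon unfolding monoidal_category_def by blast
  have E': "ide C E \<in> Hom C E E" "cmp C (ide C E) (ide C E) = ide C E"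
    using category_ide_Hom[OF C E] category_cmp_ide_left[OF C category_ide_Hom[OF C E]] by auto
  show ?thesis
    using mon E E' unfolding endofunctor_def monoidal_category_def by metis
qed

theorem lemma1:
  fixes C :: "('o,'m) cat" and M :: "('o,'m) mon_str"
  assumes mon: "monoidal_category C M"
    and lim: "has_finite_limits C"
    and colim: "has_countable_colimits C"
    and pres_r: "\<forall>Y\<in>Ob C.
        preserves_reflexive_coequalizers C (\<lambda>a. tob M a Y) (\<lambda>f. tar M f (ide C Y)) \<and>
        preserves_chain_colimits C (\<lambda>a. tob M a Y) (\<lambda>f. tar M f (ide C Y))"
    and pres_l: "\<forall>Y\<in>Ob C.
        preserves_reflexive_coequalizers C (\<lambda>a. tob M Y a) (\<lambda>f. tar M (ide C Y) f) \<and>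
        preserves_chain_colimits C (\<lambda>a. tob M Y a) (\<lambda>f. tar M (ide C Y) f)"
    and q: "q \<in> Hom C B C1" and q': "q' \<in> Hom C B C2"
    and rq: "regular_epi C q" and rq': "regular_epi C q'"
    and r: "r \<in> Hom C C1 D" and r': "r' \<in> Hom C C2 D"
    and po: "pushout C q q' r r'"
    and E: "E \<in> Ob C"
  shows "pushout C (tar M (ide C E) q) (tar M (ide C E) q') (tar M (ide C E) r) (tar M (ide C E) r') \<and>
         pushout C (tar M q (ide C E)) (tar M q' (ide C E)) (tar M r (ide C E)) (tar M r' (ide C E))"
proof
  have C: "category C" using mon unfolding monoidal_category_def by blast
  show "pushout C (tar M (ide C E) q) (tar M (ide C E) q') (tar M (ide C E) r) (tar M (ide C E) r')"
    using endofunctor_preserves_pushout_of_regular_epis[OF C colim endofunctor_tensor_left[OF mon E]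
        _ rq rq' po] pres_l E by blast
  show "pushout C (tar M q (ide C E)) (tar M q' (ide C E)) (tar M r (ide C E)) (tar M r' (ide C E))"
    using endofunctor_preserves_pushout_of_regular_epis[OF C colim endofunctor_tensor_right[OF mon E]
        _ rq rq' po] pres_r E by blast
qed

end
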